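(* Let $N_f\ge 1$ and $N_c$ be integers with $1\le N_c\le N_f$, let $p_1,\dots,p_{N_f}>0$ with $\sum_f p_f=1$, and let $\alpha>2$, $M_1\ge1$ (integer), $\lambda_1,\lambda_2,\lambda_u,P_1,P_2,B_1,B_2,W,R_0>0$. Put $M_{12}=M_1$, $\lambda_{12}=\lambda_1/\lambda_2$, $P_{12}=P_1/P_2$, $B_{12}=B_1/B_2$. Let $\mathcal F=\{\mathbf q=(q_f)_{f=1}^{N_f}\in[0,1]^{N_f}:\sum_f q_f\le N_c\}$ and $\mathcal P^o=\max_{\mathbf q\in\mathcal F}\sum_{f=1}^{N_f}\frac{p_fq_f}{\lambda_{12}(P_{12}B_{12})^{2/\alpha}+q_f}$. Define $\bar\gamma=2^{\frac{R_0}{W}\left(1+\frac{1.28\lambda_u\mathcal P^o}{\lambda_2}\right)}-1$, $\bar p=1-\big(1+\frac{\mathcal P^o\lambda_u}{3.5\lambda_2}\big)^{-3.5}$, $$\mathsf C_1(x)=\lambda_{12}(P_{12}B_{12})^{2/\alpha}\,{}_2F_1\!\Big[-\tfrac2\alpha,M_1;1-\tfrac2\alpha;-\tfrac{x}{M_{12}B_{12}}\Big],\quad \mathsf C_2(x)=\Gamma(1-\tfrac2\alpha)\Gamma(1+\tfrac2\alpha)x^{2/\alpha},$$ $$\mathsf C_3(x)={}_2F_1\!\Big[-\tfrac2\alpha,1;1-\tfrac2\alpha;-x\Big]-\mathsf C_2(x)-1,$$ and set $c_1=\mathsf C_1(\bar\gamma)+\bar p\,\mathsf C_2(\bar\gamma)$,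 $c_2=\bar p\,\mathsf C_3(\bar\gamma)+1$. Consider the function $$\underline p_{{\rm s},2}(\mathbf q)=\sum_{f=1}^{N_f}\frac{p_fq_f}{c_1+c_2q_f}.$$ For $\nu>0$ let $q_f(\nu)=\Big[\frac{\sqrt{c_1}}{\sqrt\nu\,c_2}\sqrt{p_f}-\frac{c_1}{c_2}\Big]_0^1$. Then there exists $\nu>0$ with $\sum_{f=1}^{N_f}q_f(\nu)=N_c$, and for any such $\nu$ the vector $(q_f(\nu))_{f=1}^{N_f}$ maximizes $\underline p_{{\rm s},2}$ over $\mathcal F$.
   Context: $[x]_0^1=\max\{\min\{x,1\},0\}$. ${}_2F_1$ denotes the Gauss hypergeometric function and $\Gamma$ the Gamma function. In the paper, $\underline p_{{\rm s},2}$ is a lower bound on the success probability contributed by the helper tier, $\mathcal P^o$ the maximal helper-tier association probability, $\bar\gamma$ and $\bar p$ the resulting upper bounds on the equivalent SINR threshold and helper activity probability; the vector $(q_f)$ is the helper caching probability vector, subject to the cache size constraint $\sum_f q_f\le N_c$. *)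

theory Defs
  imports "HOL-Analysis.Analysis"
begin

definition clip01 :: "real \<Rightarrow> real" where
  "clip01 x = max (min x 1) 0"

definition hyp2F1_series :: "real \<Rightarrow> real \<Rightarrow> real \<Rightarrow> real \<Rightarrow> real" where
  "hyp2F1_series a b c z =
     (\<Sum>n. pochhammer a n * pochhammer b n / (pochhammer c n * fact n) * z ^ n)"

text \<open>Gauss hypergeometric function 2F1[a,b;c;z] on real arguments z < 1:
  the power series for |z| < 1, and its standard analytic continuation to
  z \<le> -1 via the Pfaff transformation
  2F1[a,b;c;z] = (1-z)^(-a) 2F1[a,c-b;c;z/(z-1)]  (here z/(z-1) \<in> [1/2,1)).
  Values for z \<ge> 1 are not needed and left as 0.\<close>
definition hyp2F1 :: "real \<Rightarrow> real \<Rightarrow> real \<Rightarrow> real \<Rightarrow> real" where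
  "hyp2F1 a b c z =
     (if \<bar>z\<bar> < 1 then hyp2F1_series a b c z
      else if z \<le> -1 then (1 - z) powr (-a) * hyp2F1_series a (c - b) c (z / (z - 1))
      else 0)"

definition feasible_set :: "nat \<Rightarrow> nat \<Rightarrow> (nat \<Rightarrow> real) set" where
  "feasible_set Nf Nc = {q. (\<forall>f\<in>{1..Nf}. 0 \<le> q f \<and> q f \<le> 1) \<and> (\<Sum>f=1..Nf. q f) \<le> real Nc}"

end

theory Submission
  imports Defs
begin

text \<open>Once \<open>c1, c2 > 0\<close>, the objective \<open>\<Sum> p\<^sub>f q\<^sub>f / (c1 + c2 q\<^sub>f)\<close> is separable and concave, so each
  summand lies below its tangent at \<open>q\<^sub>f(\<nu>)\<close>. That tangent has slope \<open>\<nu>\<close> where \<open>q\<^sub>f(\<nu>)\<close> is not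
  clipped, and a slope of the harmless sign where it is; summing, any feasible \<open>q\<close> loses at least
  \<open>\<nu> (N\<^sub>c - \<Sum> q\<^sub>f) \<ge> 0\<close> against \<open>q(\<nu>)\<close> once \<open>\<Sum> q\<^sub>f(\<nu>) = N\<^sub>c\<close>, and such a level \<open>\<nu>\<close> exists by the
  intermediate value theorem.

  Positivity of \<open>c1, c2\<close> rests on two bounds for \<open>2F1(-\<delta>, b; 1 - \<delta>; _)\<close>, \<open>\<delta> = 2/\<alpha>\<close>: it is \<open>\<ge> 1\<close> at
  negative arguments when \<open>b \<ge> 1\<close>, and \<open>2F1(-\<delta>, 1; 1 - \<delta>; -x) \<ge> \<Gamma>(1 - \<delta>) \<Gamma>(1 + \<delta>) x^\<delta>\<close>. Both follow from
  \<open>2F1(-\<delta>, b; 1 - \<delta>; \<plusminus>y) = 1 + \<delta> y^\<delta> \<integral>_0^y t^(-\<delta>-1) (1 - (1 \<minusplus> t)^(-b)) dt\<close> for \<open>0 < y < 1\<close>, read off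
  termwise from the series (after a Pfaff transformation for arguments \<open>\<le> -1\<close>). For \<open>b = 1\<close> the
  integral is the incomplete Beta integral \<open>B(x/(1+x); 1 - \<delta>, \<delta>)\<close>, and \<open>\<Gamma>(1 - \<delta>) \<Gamma>(1 + \<delta>) = \<delta> B(1 - \<delta>, \<delta>)\<close>
  bounds the missing tail.\<close>

section \<open>Termwise primitives\<close>

text \<open>If \<open>A y = \<Sum> a\<^sub>n y^n\<close> on \<open>[0, 1)\<close>, then \<open>weighted_primitive \<delta> a y = \<integral>_0^y t^(-\<delta>) A t dt\<close>.\<close>
definition weighted_primitive :: "real \<Rightarrow> (nat \<Rightarrow> real) \<Rightarrow> real \<Rightarrow> real" where
  "weighted_primitive \<delta> a y = y powr (1 - \<delta>) * (\<Sum>n. a n / (real n + 1 - \<delta>) * y ^ n)"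

lemma weighted_primitive_zero [simp]: "weighted_primitive \<delta> a 0 = 0"
  by (simp add: weighted_primitive_def)

lemma summable_powser_div_shift:
  fixes a :: "nat \<Rightarrow> real"
  assumes \<delta>: "\<delta> < 1"
    and conv: "\<And>y. 0 < y \<Longrightarrow> y < 1 \<Longrightarrow> summable (\<lambda>n. a n * y ^ n)"
    and y: "\<bar>y\<bar> < 1"
  shows "summable (\<lambda>n. a n / (real n + 1 - \<delta>) * y ^ n)"
proof -
  define r where "r = (\<bar>y\<bar> + 1) / 2"
  have "summable (\<lambda>n. a n * r ^ n)"
    using conv y by (simp add: r_def)
  moreover have "norm y < norm r"
    using y by (simp add: r_def)
  ultimately have abs_conv: "summable (\<lambda>n. norm (a n * y ^ n))"
    by (rule powser_insidea)
  show ?thesis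
  proof (rule summable_comparison_test'[OF summable_divide[OF abs_conv, of "1 - \<delta>"]])
    fix n
    have "norm (a n / (real n + 1 - \<delta>) * y ^ n) = norm (a n * y ^ n) / (real n + 1 - \<delta>)"
      using \<delta> by (simp add: abs_mult)
    also have "\<dots> \<le> norm (a n * y ^ n) / (1 - \<delta>)"
      using \<delta> by (intro divide_left_mono) auto
    finally show "norm (a n / (real n + 1 - \<delta>) * y ^ n) \<le> norm (a n * y ^ n) / (1 - \<delta>)" .
  qed
qed

text \<open>Multiplied by \<open>y powr -\<delta>\<close>, the left-hand side is the derivative of
  \<open>y powr (1 - \<delta>) * (\<Sum>n. c n * y ^ n)\<close>.\<close>
lemma powser_div_shift_euler:
  fixes a :: "nat \<Rightarrow> real"
  assumes \<delta>: "\<delta> < 1"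
    and conv: "\<And>y. 0 < y \<Longrightarrow> y < 1 \<Longrightarrow> summable (\<lambda>n. a n * y ^ n)"
    and y: "0 < y" "y < 1"
  defines "c \<equiv> \<lambda>n. a n / (real n + 1 - \<delta>)"
  shows "(1 - \<delta>) * (\<Sum>n. c n * y ^ n) + y * (\<Sum>n. diffs c n * y ^ n) = (\<Sum>n. a n * y ^ n)"
proof -
  have c_conv: "summable (\<lambda>n. c n * z ^ n)" if "norm z < 1" for z :: real
    unfolding c_def using summable_powser_div_shift[OF \<delta> conv] that by simp
  have "summable (\<lambda>n. diffs c n * y ^ n)"
    by (rule termdiff_converges[where K=1]) (use c_conv y in auto)
  then have "(\<lambda>n. y * (diffs c n * y ^ n)) sums (y * (\<Sum>n. diffs c n * y ^ n))"
    by (intro sums_mult summable_sums)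
  then have "(\<lambda>n. real (Suc n) * c (Suc n) * y ^ Suc n) sums (y * (\<Sum>n. diffs c n * y ^ n))"
    by (simp add: diffs_def algebra_simps)
  then have "(\<lambda>n. real n * c n * y ^ n) sums (y * (\<Sum>n. diffs c n * y ^ n))"
    using sums_Suc_iff[where f = "\<lambda>n. real n * c n * y ^ n"] by simp
  moreover have "(\<lambda>n. c n * y ^ n) sums (\<Sum>n. c n * y ^ n)"
    using c_conv y by (simp add: summable_sums)
  ultimately have "(\<lambda>n. (1 - \<delta>) * (c n * y ^ n) + real n * c n * y ^ n) sums
      ((1 - \<delta>) * (\<Sum>n. c n * y ^ n) + y * (\<Sum>n. diffs c n * y ^ n))"
    by (intro sums_add sums_mult)
  moreover have "(1 - \<delta>) * (c n * y ^ n) + real n * c n * y ^ n = a n * y ^ n" for n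
  proof -
    have "real n + 1 - \<delta> \<noteq> 0" using \<delta> by linarith
    then have "(real n + 1 - \<delta>) * c n = a n" by (simp add: c_def)
    then show ?thesis by (metis distrib_right mult.assoc diff_add_eq add.commute)
  qed
  ultimately show ?thesis
    by (simp add: sums_iff)
qed

lemma has_real_derivative_weighted_primitive:
  fixes a :: "nat \<Rightarrow> real"
  assumes \<delta>: "\<delta> < 1"
    and conv: "\<And>y. 0 < y \<Longrightarrow> y < 1 \<Longrightarrow> summable (\<lambda>n. a n * y ^ n)"
    and y: "0 < y" "y < 1"
  shows "(weighted_primitive \<delta> a has_real_derivative y powr (-\<delta>) * (\<Sum>n. a n * y ^ n)) (at y)"
proof -
  define c where "c n = a n / (real n + 1 - \<delta>)" for n
  define S where "S = (\<Sum>n. c n * y ^ n)"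
  define S' where "S' = (\<Sum>n. diffs c n * y ^ n)"
  have powr_split: "y powr (1 - \<delta>) = y powr (-\<delta>) * y powr 1"
    by (metis powr_add add.commute diff_conv_add_uminus)
  have "summable (\<lambda>n. c n * z ^ n)" if "norm z < 1" for z :: real
    unfolding c_def using summable_powser_div_shift[OF \<delta> conv] that by simp
  then have "((\<lambda>z. \<Sum>n. c n * z ^ n) has_real_derivative S') (at y)"
    unfolding S'_def by (intro termdiffs_strong'[where K=1]) (use y in auto)
  then have "(weighted_primitive \<delta> a has_real_derivative
      (1 - \<delta>) * y powr (1 - \<delta> - 1) * S + y powr (1 - \<delta>) * S') (at y)"
    unfolding weighted_primitive_def[abs_def] c_def[symmetric] S_def
    using y by (auto intro!: derivative_eq_intros)
  moreover have "(1 - \<delta>) * y powr (1 - \<delta> - 1) * S + y powr (1 - \<delta>) * S' = y powr (-\<delta>) * ((1 - \<delta>) * S + y * S')"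
    using y powr_split by (simp add: algebra_simps)
  moreover have "(1 - \<delta>) * S + y * S' = (\<Sum>n. a n * y ^ n)"
    unfolding S_def S'_def c_def[abs_def] by (rule powser_div_shift_euler[OF \<delta> conv y])
  ultimately show ?thesis
    by simp
qed

lemma continuous_on_Icc_from_right_and_interior:
  fixes K :: "real \<Rightarrow> real"
  assumes "0 < b"
    and "(K \<longlongrightarrow> K 0) (at_right 0)"
    and "\<And>x. 0 < x \<Longrightarrow> x \<le> b \<Longrightarrow> isCont K x"
  shows "continuous_on {0..b} K"
proof (rule continuous_on_IccI)
  show "(K \<longlongrightarrow> K b) (at_left b)"
    using assms(3)[of b] assms(1) by (simp add: isCont_def filterlim_at_split)
qed (use assms in \<open>auto simp: isCont_def\<close>)

lemma continuous_on_weighted_primitive: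
  fixes a :: "nat \<Rightarrow> real"
  assumes \<delta>: "\<delta> < 1"
    and conv: "\<And>y. 0 < y \<Longrightarrow> y < 1 \<Longrightarrow> summable (\<lambda>n. a n * y ^ n)"
    and b: "0 < b" "b < 1"
  shows "continuous_on {0..b} (weighted_primitive \<delta> a)"
proof (rule continuous_on_Icc_from_right_and_interior[OF b(1)])
  have "summable (\<lambda>n. a n / (real n + 1 - \<delta>) * (1 / 2) ^ n)"
    using summable_powser_div_shift[OF \<delta> conv, of "1/2"] by simp
  then have "isCont (\<lambda>y. \<Sum>n. a n / (real n + 1 - \<delta>) * y ^ n) 0"
    by (rule isCont_powser) simp
  then have series_lim: "((\<lambda>y. \<Sum>n. a n / (real n + 1 - \<delta>) * y ^ n) \<longlongrightarrow>
      (\<Sum>n. a n / (real n + 1 - \<delta>) * 0 ^ n)) (at_right 0)"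
    by (simp add: isCont_def filterlim_at_split)
  have "((\<lambda>y. y powr (1 - \<delta>)) \<longlongrightarrow> 0 powr (1 - \<delta>)) (at_right 0)"
    using \<delta> by (intro tendsto_powr')
      (auto intro: tendsto_ident_at eventually_mono[OF eventually_at_right_less])
  from tendsto_mult[OF this series_lim]
  show "(weighted_primitive \<delta> a \<longlongrightarrow> weighted_primitive \<delta> a 0) (at_right 0)"
    unfolding weighted_primitive_def[abs_def] by simp
next
  fix x :: real
  assume "0 < x" "x \<le> b"
  then show "isCont (weighted_primitive \<delta> a) x"
    using has_real_derivative_weighted_primitive[OF \<delta> conv, of x] b DERIV_isCont by auto
qed

lemma weighted_primitive_nonneg:
  fixes a :: "nat \<Rightarrow> real"
  assumes \<delta>: "\<delta> < 1"
    and conv: "\<And>y. 0 < y \<Longrightarrow> y < 1 \<Longrightarrow> summable (\<lambda>n. a n * y ^ n)"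
    and nonneg: "\<And>y. 0 < y \<Longrightarrow> y < 1 \<Longrightarrow> 0 \<le> (\<Sum>n. a n * y ^ n)"
    and y: "0 \<le> y" "y < 1"
  shows "0 \<le> weighted_primitive \<delta> a y"
proof (cases "y = 0")
  case False
  with y have y: "0 < y" "y < 1" by auto
  have "weighted_primitive \<delta> a 0 \<le> weighted_primitive \<delta> a y"
  proof (rule DERIV_nonneg_imp_increasing_open[of 0 y])
    show "continuous_on {0..y} (weighted_primitive \<delta> a)"
      by (rule continuous_on_weighted_primitive[OF \<delta> conv y])
  next
    fix x :: real
    assume "0 < x" "x < y"
    then show "\<exists>d. (weighted_primitive \<delta> a has_real_derivative d) (at x) \<and> 0 \<le> d"
      using has_real_derivative_weighted_primitive[OF \<delta> conv, of x] nonneg[of x] y by auto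
  qed (use y in simp)
  then show ?thesis by simp
qed simp

section \<open>The hypergeometric series with parameters \<open>-\<delta>, b; 1 - \<delta>\<close>\<close>

lemma pochhammer_powser_sums:
  fixes b y :: real
  assumes "\<bar>y\<bar> < 1"
  shows "(\<lambda>n. pochhammer b n / fact n * y ^ n) sums (1 - y) powr (-b)"
proof -
  have "(\<lambda>n. ((-b) gchoose n) * (-y) ^ n) sums (1 + -y) powr (-b)"
    by (rule gen_binomial_real) (use assms in auto)
  moreover have "((-b) gchoose n) * (-y) ^ n = pochhammer b n / fact n * y ^ n" for n
  proof -
    have "((-b) gchoose n) * (-y) ^ n = ((-1) ^ n * (-1) ^ n) * (pochhammer b n / fact n * y ^ n)"
      by (simp add: gbinomial_pochhammer power_minus[of y])
    also have "(-1 :: real) ^ n * (-1) ^ n = 1"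
      by (simp add: power_mult_distrib[symmetric])
    finally show ?thesis by simp
  qed
  ultimately show ?thesis by simp
qed

definition binomial_tail_coeff :: "real \<Rightarrow> nat \<Rightarrow> real" where
  "binomial_tail_coeff b n = - pochhammer b (Suc n) / fact (Suc n)"

lemma binomial_tail_coeff_sums:
  assumes "\<bar>y\<bar> < 1" "y \<noteq> 0"
  shows "(\<lambda>n. binomial_tail_coeff b n * y ^ n) sums ((1 - (1 - y) powr (-b)) / y)"
proof -
  have "(\<lambda>n. pochhammer b (Suc n) / fact (Suc n) * y ^ Suc n) sums ((1 - y) powr (-b) - 1)"
    using pochhammer_powser_sums[OF assms(1), of b] by (subst sums_Suc_iff) simp
  then have "(\<lambda>n. - (pochhammer b (Suc n) / fact (Suc n) * y ^ Suc n) / y) sums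
      (- ((1 - y) powr (-b) - 1) / y)"
    by (intro sums_divide sums_minus)
  then show ?thesis
    using assms(2) by (simp add: binomial_tail_coeff_def)
qed

lemma summable_binomial_tail_coeff:
  "0 < y \<Longrightarrow> y < 1 \<Longrightarrow> summable (\<lambda>n. binomial_tail_coeff b n * y ^ n)"
  using binomial_tail_coeff_sums[of y b] by (simp add: sums_iff)

lemma alternating_binomial_tail_coeff_sums:
  assumes "\<bar>y\<bar> < 1" "y \<noteq> 0"
  shows "(\<lambda>n. - ((-1) ^ n * binomial_tail_coeff b n) * y ^ n) sums ((1 - (1 + y) powr (-b)) / y)"
proof -
  have "(\<lambda>n. - (binomial_tail_coeff b n * (-y) ^ n)) sums (- ((1 - (1 - -y) powr (-b)) / -y))"
    by (intro sums_minus binomial_tail_coeff_sums) (use assms in auto)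
  then show ?thesis
    by (simp add: power_minus[of y] mult_ac)
qed

lemma pochhammer_ratio_minus:
  assumes "\<delta> < 1"
  shows "pochhammer (-\<delta>) (Suc n) / pochhammer (1 - \<delta>) (Suc n) = -\<delta> / (real n + 1 - \<delta>)"
proof -
  have "pochhammer (1 - \<delta>) n > 0"
    using assms by (intro pochhammer_pos) simp
  then have "-\<delta> * pochhammer (1 - \<delta>) n / (pochhammer (1 - \<delta>) n * (1 - \<delta> + real n)) =
      -\<delta> / (1 - \<delta> + real n)"
    by simp
  moreover have "pochhammer (-\<delta>) (Suc n) = -\<delta> * pochhammer (1 - \<delta>) n"
    using pochhammer_rec[of "-\<delta>" n] by (simp add: add.commute)
  ultimately show ?thesis
    by (simp only: pochhammer_Suc[of "1 - \<delta>" n]) (simp add: algebra_simps)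
qed

lemma hyp2F1_series_eq:
  assumes \<delta>: "\<delta> < 1" and y: "\<bar>y\<bar> < 1"
  shows "hyp2F1_series (-\<delta>) b (1 - \<delta>) y =
           1 + \<delta> * y * (\<Sum>n. binomial_tail_coeff b n / (real n + 1 - \<delta>) * y ^ n)"
proof -
  define t where "t n = pochhammer (-\<delta>) n * pochhammer b n / (pochhammer (1 - \<delta>) n * fact n) * y ^ n"
    for n
  define S where "S = (\<Sum>n. binomial_tail_coeff b n / (real n + 1 - \<delta>) * y ^ n)"
  have "summable (\<lambda>n. binomial_tail_coeff b n / (real n + 1 - \<delta>) * y ^ n)"
    by (rule summable_powser_div_shift[OF \<delta> summable_binomial_tail_coeff y])
  then have "(\<lambda>n. \<delta> * y * (binomial_tail_coeff b n / (real n + 1 - \<delta>) * y ^ n)) sums (\<delta> * y * S)"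
    unfolding S_def by (intro sums_mult summable_sums)
  moreover have "t (Suc n) = \<delta> * y * (binomial_tail_coeff b n / (real n + 1 - \<delta>) * y ^ n)" for n
  proof -
    have "t (Suc n) = (pochhammer (-\<delta>) (Suc n) / pochhammer (1 - \<delta>) (Suc n)) *
        (pochhammer b (Suc n) / fact (Suc n)) * y ^ Suc n"
      unfolding t_def
      by (simp only: times_divide_eq_left times_divide_eq_right divide_divide_eq_left mult_ac)
    also have "\<dots> = \<delta> * y * (binomial_tail_coeff b n / (real n + 1 - \<delta>) * y ^ n)"
      unfolding pochhammer_ratio_minus[OF \<delta>] binomial_tail_coeff_def
      by (simp add: divide_inverse mult_ac)
    finally show ?thesis .
  qed
  ultimately have "(\<lambda>n. t (Suc n)) sums (\<delta> * y * S)"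
    by (simp only:)
  then have "t sums (\<delta> * y * S + t 0)"
    by (simp only: sums_Suc_iff)
  moreover have "t 0 = 1"
    by (simp add: t_def)
  ultimately show ?thesis
    unfolding hyp2F1_series_def S_def[symmetric] t_def[symmetric] by (simp add: sums_iff)
qed

lemma hyp2F1_series_pos_eq:
  assumes \<delta>: "\<delta> < 1" and w: "0 < w" "w < 1"
  shows "hyp2F1_series (-\<delta>) b (1 - \<delta>) w =
           1 + \<delta> * w powr \<delta> * weighted_primitive \<delta> (binomial_tail_coeff b) w"
proof -
  have "w * s = w powr \<delta> * (w powr (1 - \<delta>) * s)" for s
    using w by (simp add: powr_add[symmetric] mult.assoc[symmetric])
  then show ?thesis
    using hyp2F1_series_eq[OF \<delta>, of w b] w by (simp add: weighted_primitive_def mult.assoc)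
qed

lemma hyp2F1_series_neg_eq:
  assumes \<delta>: "\<delta> < 1" and z: "0 < z" "z < 1"
  shows "hyp2F1_series (-\<delta>) b (1 - \<delta>) (-z) =
           1 + \<delta> * z powr \<delta> * weighted_primitive \<delta> (\<lambda>n. - ((-1) ^ n * binomial_tail_coeff b n)) z"
proof -
  have "summable (\<lambda>n. binomial_tail_coeff b n / (real n + 1 - \<delta>) * (-z) ^ n)"
    by (rule summable_powser_div_shift[OF \<delta> summable_binomial_tail_coeff]) (use z in auto)
  then have "(\<Sum>n. - ((-1) ^ n * binomial_tail_coeff b n) / (real n + 1 - \<delta>) * z ^ n) =
      - (\<Sum>n. binomial_tail_coeff b n / (real n + 1 - \<delta>) * (-z) ^ n)"
    by (subst suminf_minus[symmetric]) (simp_all add: power_minus[of z] mult_ac)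
  moreover have "z * s = z powr \<delta> * (z powr (1 - \<delta>) * s)" for s
    using z by (simp add: powr_add[symmetric] mult.assoc[symmetric])
  ultimately show ?thesis
    using hyp2F1_series_eq[OF \<delta>, of "-z" b] z by (simp add: weighted_primitive_def mult.assoc)
qed

lemma weighted_primitive_binomial_tail_nonneg:
  assumes "\<delta> < 1" "b \<le> 0" "0 \<le> y" "y < 1"
  shows "0 \<le> weighted_primitive \<delta> (binomial_tail_coeff b) y"
proof (rule weighted_primitive_nonneg[OF assms(1) summable_binomial_tail_coeff _ assms(3,4)])
  fix t :: real
  assume t: "0 < t" "t < 1"
  have "(1 - t) powr (-b) \<le> 1"
    using t assms(2) by (intro powr_le1) auto
  then show "0 \<le> (\<Sum>n. binomial_tail_coeff b n * t ^ n)"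
    using binomial_tail_coeff_sums[of t b] t by (simp add: sums_iff)
qed

lemma weighted_primitive_alternating_binomial_tail_nonneg:
  assumes "\<delta> < 1" "0 \<le> b" "0 \<le> z" "z < 1"
  shows "0 \<le> weighted_primitive \<delta> (\<lambda>n. - ((-1) ^ n * binomial_tail_coeff b n)) z"
proof (rule weighted_primitive_nonneg[OF assms(1) _ _ assms(3,4)])
  fix t :: real
  assume t: "0 < t" "t < 1"
  then have sums: "(\<lambda>n. - ((-1) ^ n * binomial_tail_coeff b n) * t ^ n) sums ((1 - (1 + t) powr (-b)) / t)"
    by (intro alternating_binomial_tail_coeff_sums) auto
  then show "summable (\<lambda>n. - ((-1) ^ n * binomial_tail_coeff b n) * t ^ n)"
    by (rule sums_summable)
  have "(1 + t) powr (-b) \<le> 1 powr (-b)"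
    using t assms(2) by (intro powr_mono2') auto
  then show "0 \<le> (\<Sum>n. - ((-1) ^ n * binomial_tail_coeff b n) * t ^ n)"
    using sums t by (simp add: sums_iff)
qed

lemma hyp2F1_neg_ge_one:
  assumes \<delta>: "0 < \<delta>" "\<delta> < 1" and M: "1 \<le> M" and z: "0 < z"
  shows "1 \<le> hyp2F1 (-\<delta>) M (1 - \<delta>) (-z)"
proof (cases "z < 1")
  case True
  then show ?thesis
    using hyp2F1_series_neg_eq[OF \<delta>(2) z True, of M] \<delta> z M
      weighted_primitive_alternating_binomial_tail_nonneg[OF \<delta>(2), of M z]
    by (simp add: hyp2F1_def)
next
  case False
  define w where "w = z / (1 + z)"
  have w: "0 < w" "w < 1"
    using z by (auto simp: w_def)
  have "- z / (- z - 1) = w"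
    using z by (simp add: w_def field_simps)
  then have "hyp2F1 (-\<delta>) M (1 - \<delta>) (-z) =
      (1 + z) powr \<delta> * (1 + \<delta> * w powr \<delta> * weighted_primitive \<delta> (binomial_tail_coeff (1 - \<delta> - M)) w)"
    using hyp2F1_series_pos_eq[OF \<delta>(2) w, of "1 - \<delta> - M"] False z by (simp add: hyp2F1_def)
  moreover have "1 \<le> 1 + \<delta> * w powr \<delta> * weighted_primitive \<delta> (binomial_tail_coeff (1 - \<delta> - M)) w"
    using weighted_primitive_binomial_tail_nonneg[OF \<delta>(2), of "1 - \<delta> - M" w] \<delta> M w by simp
  moreover have "1 \<le> (1 + z) powr \<delta>"
    using z \<delta> by (intro ge_one_powr_ge_zero) auto
  ultimately show ?thesis
    using mult_mono[of 1 "(1 + z) powr \<delta>" 1] by auto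
qed

section \<open>The incomplete Beta function\<close>

definition beta_kernel :: "real \<Rightarrow> real \<Rightarrow> real" where
  "beta_kernel \<delta> t = t powr (-\<delta>) * (1 - t) powr (\<delta> - 1)"

text \<open>The integral \<open>\<integral>_0^w beta_kernel \<delta>\<close>, in the closed form obtained by integrating by parts against
  \<open>(1 - (1 - t)^\<delta>) / \<delta>\<close>: what remains is \<open>t^(-\<delta>)\<close> times the series of \<open>(1 - (1 - t)^\<delta>) / t\<close>.\<close>
definition inc_beta :: "real \<Rightarrow> real \<Rightarrow> real" where
  "inc_beta \<delta> w = weighted_primitive \<delta> (binomial_tail_coeff (-\<delta>)) w + (1 - (1 - w) powr \<delta>) / (\<delta> * w powr \<delta>)"

lemma inc_beta_zero [simp]: "inc_beta \<delta> 0 = 0"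
  by (simp add: inc_beta_def)

lemma has_real_derivative_inc_beta:
  assumes \<delta>: "0 < \<delta>" "\<delta> < 1" and w: "0 < w" "w < 1"
  shows "(inc_beta \<delta> has_real_derivative beta_kernel \<delta> w) (at w)"
proof -
  have series: "(\<Sum>n. binomial_tail_coeff (-\<delta>) n * w ^ n) = (1 - (1 - w) powr \<delta>) / w"
    using binomial_tail_coeff_sums[of w "-\<delta>"] w by (simp add: sums_iff)
  have "(weighted_primitive \<delta> (binomial_tail_coeff (-\<delta>)) has_real_derivative
      w powr (-\<delta>) * ((1 - (1 - w) powr \<delta>) / w)) (at w)"
    using has_real_derivative_weighted_primitive[OF \<delta>(2) summable_binomial_tail_coeff[where b = "-\<delta>"] w]
    by (simp only: series)
  moreover have "((\<lambda>w. (1 - (1 - w) powr \<delta>) / (\<delta> * w powr \<delta>)) has_real_derivative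
      (\<delta> * ((1 - w) powr \<delta> / (1 - w)) * (\<delta> * w powr \<delta>) - (1 - (1 - w) powr \<delta>) * (\<delta> * (\<delta> * (w powr \<delta> / w))))
        / (\<delta> * w powr \<delta>)\<^sup>2) (at w)"
    using w \<delta> by (auto intro!: derivative_eq_intros simp: powr_diff power2_eq_square mult_ac)
  ultimately have "(inc_beta \<delta> has_real_derivative w powr (-\<delta>) * ((1 - (1 - w) powr \<delta>) / w) +
      (\<delta> * ((1 - w) powr \<delta> / (1 - w)) * (\<delta> * w powr \<delta>) - (1 - (1 - w) powr \<delta>) * (\<delta> * (\<delta> * (w powr \<delta> / w))))
        / (\<delta> * w powr \<delta>)\<^sup>2) (at w)"
    unfolding inc_beta_def[abs_def] by (rule DERIV_add)
  moreover have "w powr (-\<delta>) * ((1 - (1 - w) powr \<delta>) / w) +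
      (\<delta> * ((1 - w) powr \<delta> / (1 - w)) * (\<delta> * w powr \<delta>) - (1 - (1 - w) powr \<delta>) * (\<delta> * (\<delta> * (w powr \<delta> / w))))
        / (\<delta> * w powr \<delta>)\<^sup>2 = beta_kernel \<delta> w"
  proof -
    define P where "P = w powr \<delta>"
    define u where "u = (1 - w) powr \<delta>"
    have "P > 0"
      using w by (simp add: P_def)
    have inv_P: "w powr (-\<delta>) = 1 / P"
      by (simp add: P_def powr_minus_divide)
    have kernel: "beta_kernel \<delta> w = (1 / P) * (u / (1 - w))"
      using w by (simp add: beta_kernel_def P_def u_def powr_minus_divide powr_diff)
    show ?thesis
      unfolding inv_P kernel P_def[symmetric] u_def[symmetric]
      using \<open>P > 0\<close> w \<delta> by (simp add: field_simps power2_eq_square)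
  qed
  ultimately show ?thesis by simp
qed

lemma tendsto_inc_beta_boundary_term:
  fixes \<delta> :: real
  assumes \<delta>: "0 < \<delta>" "\<delta> < 1"
  shows "((\<lambda>w. (1 - (1 - w) powr \<delta>) / (\<delta> * w powr \<delta>)) \<longlongrightarrow> 0) (at_right 0)"
proof (rule tendsto_sandwich[where f = "\<lambda>_. 0" and h = "\<lambda>w. w powr (1 - \<delta>) / \<delta>"])
  have bounds: "0 \<le> (1 - (1 - w) powr \<delta>) / (\<delta> * w powr \<delta>) \<and>
      (1 - (1 - w) powr \<delta>) / (\<delta> * w powr \<delta>) \<le> w powr (1 - \<delta>) / \<delta>" if w: "0 < w" "w < 1" for w
  proof -
    have "(1 - w) powr \<delta> \<le> 1"
      by (rule powr_le1) (use w \<delta> in auto)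
    moreover have "(1 - w) powr 1 \<le> (1 - w) powr \<delta>"
      using w \<delta> by (intro powr_mono') auto
    moreover have "w / (\<delta> * w powr \<delta>) = w powr (1 - \<delta>) / \<delta>"
      using w by (simp add: powr_diff)
    ultimately show ?thesis
      using w \<delta> divide_right_mono[of "1 - (1 - w) powr \<delta>" w "\<delta> * w powr \<delta>"] by auto
  qed
  have "eventually (\<lambda>w. 0 < w \<and> w < 1) (at_right (0 :: real))"
    unfolding eventually_at_right_field by (intro exI[of _ 1]) auto
  then show "eventually (\<lambda>w. 0 \<le> (1 - (1 - w) powr \<delta>) / (\<delta> * w powr \<delta>)) (at_right 0)"
    and "eventually (\<lambda>w. (1 - (1 - w) powr \<delta>) / (\<delta> * w powr \<delta>) \<le> w powr (1 - \<delta>) / \<delta>) (at_right 0)"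
    by (auto elim!: eventually_mono dest: bounds)
  have "((\<lambda>w. w powr (1 - \<delta>) / \<delta>) \<longlongrightarrow> 0 powr (1 - \<delta>) / \<delta>) (at_right 0)"
    using \<delta> by (intro tendsto_divide tendsto_powr')
      (auto intro: tendsto_ident_at eventually_mono[OF eventually_at_right_less])
  then show "((\<lambda>w. w powr (1 - \<delta>) / \<delta>) \<longlongrightarrow> 0) (at_right 0)"
    by simp
qed simp

lemma continuous_on_inc_beta:
  assumes \<delta>: "0 < \<delta>" "\<delta> < 1" and b: "0 < b" "b < 1"
  shows "continuous_on {0..b} (inc_beta \<delta>)"
proof (rule continuous_on_Icc_from_right_and_interior[OF b(1)])
  have "(weighted_primitive \<delta> (binomial_tail_coeff (-\<delta>)) \<longlongrightarrow> 0) (at_right 0)"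
    using continuous_on_Icc_at_rightD[OF continuous_on_weighted_primitive[OF \<delta>(2) summable_binomial_tail_coeff b] b(1)]
    by simp
  from tendsto_add[OF this tendsto_inc_beta_boundary_term[OF \<delta>]]
  show "(inc_beta \<delta> \<longlongrightarrow> inc_beta \<delta> 0) (at_right 0)"
    unfolding inc_beta_def[abs_def] by simp
next
  fix x :: real
  assume "0 < x" "x \<le> b"
  then show "isCont (inc_beta \<delta>) x"
    using has_real_derivative_inc_beta[OF \<delta>, of x] b DERIV_isCont by auto
qed

lemma has_integral_inc_beta:
  assumes \<delta>: "0 < \<delta>" "\<delta> < 1" and w: "0 < w" "w < 1"
  shows "(beta_kernel \<delta> has_integral inc_beta \<delta> w) {0..w}"
proof -
  have "(beta_kernel \<delta> has_integral inc_beta \<delta> w - inc_beta \<delta> 0) {0..w}"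
  proof (rule fundamental_theorem_of_calculus_interior)
    show "continuous_on {0..w} (inc_beta \<delta>)"
      by (rule continuous_on_inc_beta[OF \<delta> w])
  next
    fix x
    assume "x \<in> {0<..<w}"
    then show "(inc_beta \<delta> has_vector_derivative beta_kernel \<delta> x) (at x)"
      using has_real_derivative_inc_beta[OF \<delta>, of x] w
      by (simp add: has_real_derivative_iff_has_vector_derivative)
  qed (use w in auto)
  then show ?thesis by simp
qed

lemma Gamma_one_minus_times_Gamma_one_plus:
  fixes \<delta> :: real
  assumes "0 < \<delta>"
  shows "Gamma (1 - \<delta>) * Gamma (1 + \<delta>) = \<delta> * Beta (1 - \<delta>) \<delta>"
proof -
  have "\<delta> \<notin> \<int>\<^sub>\<le>\<^sub>0"
    using assms nonpos_Ints_nonpos by fastforce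
  then have "Gamma (1 + \<delta>) = \<delta> * Gamma \<delta>"
    using Gamma_plus1[of \<delta>] by (simp add: add.commute)
  then show ?thesis
    by (simp add: Beta_def)
qed

lemma beta_kernel_tail_integral_le:
  assumes \<delta>: "0 < \<delta>" "\<delta> < 1" and w: "0 < w" "w < 1"
    and J: "(beta_kernel \<delta> has_integral J) {w..1}"
  shows "\<delta> * J \<le> ((1 - w) / w) powr \<delta>"
proof -
  define F where "F t = - (w powr (-\<delta>) * (1 - t) powr \<delta> / \<delta>)" for t
  have majorant: "((\<lambda>t. w powr (-\<delta>) * (1 - t) powr (\<delta> - 1)) has_integral F 1 - F w) {w..1}"
  proof (rule fundamental_theorem_of_calculus_interior)
    show "continuous_on {w..1} F"
      unfolding F_def[abs_def] using \<delta> by (intro continuous_intros continuous_on_powr') auto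
  next
    fix x
    assume x: "x \<in> {w<..<1}"
    have "(F has_real_derivative - (w powr (-\<delta>) * (\<delta> * (1 - x) powr (\<delta> - 1) * (-1)) / \<delta>)) (at x)"
      unfolding F_def[abs_def] using x \<delta> by (auto intro!: derivative_eq_intros)
    then show "(F has_vector_derivative w powr (-\<delta>) * (1 - x) powr (\<delta> - 1)) (at x)"
      using \<delta> by (simp add: has_real_derivative_iff_has_vector_derivative)
  qed (use w in auto)
  have "J \<le> F 1 - F w"
  proof (rule has_integral_le[OF J majorant])
    fix t
    assume "t \<in> {w..1}"
    then have "t powr (-\<delta>) \<le> w powr (-\<delta>)"
      using w \<delta> by (intro powr_mono2') auto
    then show "beta_kernel \<delta> t \<le> w powr (-\<delta>) * (1 - t) powr (\<delta> - 1)"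
      unfolding beta_kernel_def by (intro mult_right_mono) auto
  qed
  then have "\<delta> * J \<le> w powr (-\<delta>) * (1 - w) powr \<delta>"
    using \<delta> by (simp add: F_def field_simps)
  also have "\<dots> = ((1 - w) / w) powr \<delta>"
    using w by (simp add: powr_divide powr_minus_divide)
  finally show ?thesis .
qed

lemma inc_beta_lower_bound:
  assumes \<delta>: "0 < \<delta>" "\<delta> < 1" and w: "0 < w" "w < 1"
  shows "Gamma (1 - \<delta>) * Gamma (1 + \<delta>) - ((1 - w) / w) powr \<delta> \<le> \<delta> * inc_beta \<delta> w"
proof -
  have beta: "(beta_kernel \<delta> has_integral Beta (1 - \<delta>) \<delta>) {0..1}"
    using has_integral_Beta_real[of "1 - \<delta>" \<delta>] \<delta> unfolding beta_kernel_def[abs_def] by simp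
  have "beta_kernel \<delta> integrable_on {w..1}"
    by (rule integrable_subinterval_real[OF has_integral_integrable[OF beta]]) (use w in auto)
  then obtain J where J: "(beta_kernel \<delta> has_integral J) {w..1}"
    by blast
  have "(beta_kernel \<delta> has_integral inc_beta \<delta> w + J) {0..1}"
    by (rule has_integral_combine[OF _ _ has_integral_inc_beta[OF \<delta> w] J]) (use w in auto)
  then have "J = Beta (1 - \<delta>) \<delta> - inc_beta \<delta> w"
    using has_integral_unique[OF beta] by simp
  then have "\<delta> * Beta (1 - \<delta>) \<delta> = \<delta> * J + \<delta> * inc_beta \<delta> w"
    by (simp add: right_diff_distrib)
  then show ?thesis
    using beta_kernel_tail_integral_le[OF \<delta> w J] Gamma_one_minus_times_Gamma_one_plus[OF \<delta>(1)]
    by linarith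
qed

lemma alternating_geometric_sums:
  fixes y :: real
  assumes "\<bar>y\<bar> < 1"
  shows "(\<lambda>n. (-1) ^ n * y ^ n) sums (1 / (1 + y))"
  using geometric_sums[of "-y"] assms by (simp add: power_minus[of y])

lemma beta_kernel_moebius:
  assumes "0 < t"
  shows "beta_kernel \<delta> (t / (1 + t)) * (1 / (1 + t)\<^sup>2) = t powr (-\<delta>) * (1 / (1 + t))"
proof -
  have "1 - t / (1 + t) = 1 / (1 + t)"
    using assms by (simp add: field_simps)
  then have "beta_kernel \<delta> (t / (1 + t)) = t powr (-\<delta>) * (1 + t) powr \<delta> * ((1 + t) / (1 + t) powr \<delta>)"
    using assms by (simp add: beta_kernel_def powr_divide powr_minus_divide powr_diff)
  then have "beta_kernel \<delta> (t / (1 + t)) = t powr (-\<delta>) * (1 + t)"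
    using assms by simp
  then show ?thesis
    using assms by (simp add: power2_eq_square)
qed

lemma weighted_primitive_alternating_eq_inc_beta:
  assumes \<delta>: "0 < \<delta>" "\<delta> < 1" and x: "0 < x" "x < 1"
  shows "weighted_primitive \<delta> (\<lambda>n. (-1) ^ n) x = inc_beta \<delta> (x / (1 + x))"
proof -
  define D where "D t = weighted_primitive \<delta> (\<lambda>n. (-1) ^ n) t - inc_beta \<delta> (t / (1 + t))" for t
  have conv: "summable (\<lambda>n. (-1) ^ n * y ^ n)" if "0 < y" "y < 1" for y :: real
    using alternating_geometric_sums[of y] that sums_summable by auto
  have "continuous_on {0..x} (\<lambda>t. inc_beta \<delta> (t / (1 + t)))"
  proof (rule continuous_on_compose2[of "{0..x / (1 + x)}" "inc_beta \<delta>"])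
    show "continuous_on {0..x / (1 + x)} (inc_beta \<delta>)"
      by (rule continuous_on_inc_beta[OF \<delta>]) (use x in auto)
    show "continuous_on {0..x} (\<lambda>t. t / (1 + t))"
      by (intro continuous_intros) auto
    show "(\<lambda>t. t / (1 + t)) ` {0..x} \<subseteq> {0..x / (1 + x)}"
      using x by (auto simp: field_simps)
  qed
  then have "continuous_on {0..x} D"
    unfolding D_def[abs_def]
    by (intro continuous_on_diff continuous_on_weighted_primitive[OF \<delta>(2) conv x])
  moreover have "(D has_real_derivative 0) (at t)" if t: "0 < t" "t < x" for t
  proof -
    have "(\<Sum>n. (-1) ^ n * t ^ n) = 1 / (1 + t)"
      using alternating_geometric_sums[of t] t x by (simp add: sums_iff)
    then have primitive: "(weighted_primitive \<delta> (\<lambda>n. (-1) ^ n) has_real_derivative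
        t powr (-\<delta>) * (1 / (1 + t))) (at t)"
      using has_real_derivative_weighted_primitive[OF \<delta>(2) conv, of t] t x by simp
    have inner: "((\<lambda>t. t / (1 + t)) has_real_derivative 1 / (1 + t)\<^sup>2) (at t)"
      using t by (auto intro!: derivative_eq_intros simp: field_simps power2_eq_square)
    have "0 < t / (1 + t)" "t / (1 + t) < 1"
      using t by auto
    from DERIV_chain2[OF has_real_derivative_inc_beta[OF \<delta> this] inner]
    have composed: "((\<lambda>t. inc_beta \<delta> (t / (1 + t))) has_real_derivative
        beta_kernel \<delta> (t / (1 + t)) * (1 / (1 + t)\<^sup>2)) (at t)" .
    show ?thesis
      unfolding D_def[abs_def] using DERIV_diff[OF primitive composed[unfolded beta_kernel_moebius[OF t(1)]]]
      by simp
  qed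
  ultimately have "((\<lambda>_. 0) has_integral (D x - D 0)) {0..x}"
    by (intro fundamental_theorem_of_calculus_interior)
      (use x in \<open>auto simp: has_real_derivative_iff_has_vector_derivative[symmetric]\<close>)
  then have "D x = D 0"
    using has_integral_unique has_integral_0 by force
  then show ?thesis
    by (simp add: D_def)
qed

lemma binomial_tail_coeff_one [simp]: "binomial_tail_coeff 1 n = -1"
  by (simp add: binomial_tail_coeff_def pochhammer_fact[symmetric])

lemma hyp2F1_one_eq_inc_beta:
  assumes \<delta>: "0 < \<delta>" "\<delta> < 1" and x: "0 < x"
  shows "hyp2F1 (-\<delta>) 1 (1 - \<delta>) (-x) = 1 + \<delta> * x powr \<delta> * inc_beta \<delta> (x / (1 + x))"
proof -
  define w where "w = x / (1 + x)"
  have w: "0 < w" "w < 1"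
    using x by (auto simp: w_def)
  have "(1 + x) * w = x" "(1 + x) * (1 - w) = 1"
    using x by (simp_all add: w_def field_simps)
  then have x_w: "(1 + x) powr \<delta> * w powr \<delta> = x powr \<delta>" "(1 + x) powr \<delta> * (1 - w) powr \<delta> = 1"
    using x w by (simp_all add: powr_mult[symmetric])
  show ?thesis
  proof (cases "x < 1")
    case True
    then show ?thesis
      using hyp2F1_series_neg_eq[OF \<delta>(2) x True, of 1]
        weighted_primitive_alternating_eq_inc_beta[OF \<delta> x True] x
      by (simp add: hyp2F1_def)
  next
    case False
    have "- x / (- x - 1) = w"
      using x by (simp add: w_def field_simps)
    then have "hyp2F1 (-\<delta>) 1 (1 - \<delta>) (-x) =
        (1 + x) powr \<delta> * (1 + \<delta> * w powr \<delta> * weighted_primitive \<delta> (binomial_tail_coeff (-\<delta>)) w)"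
      using hyp2F1_series_pos_eq[OF \<delta>(2) w, of "-\<delta>"] False x by (simp add: hyp2F1_def)
    also have "\<dots> = (1 + x) powr \<delta> * ((1 - w) powr \<delta> + \<delta> * w powr \<delta> * inc_beta \<delta> w)"
      using w \<delta> by (simp add: inc_beta_def field_simps)
    also have "\<dots> = 1 + \<delta> * x powr \<delta> * inc_beta \<delta> w"
      using x_w by (simp add: algebra_simps)
    finally show ?thesis
      by (simp add: w_def)
  qed
qed

lemma hyp2F1_one_ge_Gamma:
  assumes \<delta>: "0 < \<delta>" "\<delta> < 1" and x: "0 < x"
  shows "Gamma (1 - \<delta>) * Gamma (1 + \<delta>) * x powr \<delta> \<le> hyp2F1 (-\<delta>) 1 (1 - \<delta>) (-x)"
proof -
  define w where "w = x / (1 + x)"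
  have w: "0 < w" "w < 1"
    using x by (auto simp: w_def)
  have "x powr \<delta> * ((1 - w) / w) powr \<delta> = 1"
    using x by (simp add: w_def powr_mult[symmetric] field_simps)
  moreover have "x powr \<delta> * (Gamma (1 - \<delta>) * Gamma (1 + \<delta>) - ((1 - w) / w) powr \<delta>) \<le>
      x powr \<delta> * (\<delta> * inc_beta \<delta> w)"
    using inc_beta_lower_bound[OF \<delta> w] by (intro mult_left_mono) auto
  ultimately show ?thesis
    using hyp2F1_one_eq_inc_beta[OF \<delta> x] by (simp add: w_def algebra_simps)
qed

section \<open>Water-filling\<close>

lemma ratio_le_tangent:
  fixes c1 c2 p q r :: real
  assumes c: "0 < c1" "0 < c2" and p: "0 \<le> p" and q: "0 \<le> q" and r: "0 \<le> r"
  shows "p * q / (c1 + c2 * q) - p * r / (c1 + c2 * r) \<le> p * c1 / (c1 + c2 * r)\<^sup>2 * (q - r)"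
proof -
  define D where "D = c1 + c2 * q"
  define E where "E = c1 + c2 * r"
  have "0 < D" "0 < E"
    using c q r by (simp_all add: D_def E_def add_pos_nonneg)
  have "p * q / D - p * r / E - p * c1 * (q - r) / E\<^sup>2 = (p * q * E\<^sup>2 - p * r * D * E - p * c1 * (q - r) * D) / (D * E\<^sup>2)"
    using \<open>0 < D\<close> \<open>0 < E\<close> by (simp add: field_simps power2_eq_square)
  also have "p * q * E\<^sup>2 - p * r * D * E - p * c1 * (q - r) * D = - (p * c1 * c2 * (q - r)\<^sup>2)"
    by (simp add: D_def E_def algebra_simps power2_eq_square)
  also have "- (p * c1 * c2 * (q - r)\<^sup>2) / (D * E\<^sup>2) \<le> 0"
    using c p \<open>0 < D\<close> \<open>0 < E\<close> by (intro divide_nonpos_pos) auto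
  finally show ?thesis
    by (simp add: D_def E_def)
qed

lemma clip01_tangent_slope_le:
  fixes c1 c2 u q :: real
  assumes c: "0 < c1" "0 < c2" and X: "0 < c1 + c2 * u" and q: "0 \<le> q" "q \<le> 1"
  shows "c1 / (c1 + c2 * clip01 u)\<^sup>2 * (q - clip01 u) \<le> c1 / (c1 + c2 * u)\<^sup>2 * (q - clip01 u)"
proof (cases "u \<le> 0")
  case True
  then have "c1 + c2 * u \<le> c1 + c2 * clip01 u"
    using c by (simp add: clip01_def mult_nonneg_nonpos)
  then have "c1 / (c1 + c2 * clip01 u)\<^sup>2 \<le> c1 / (c1 + c2 * u)\<^sup>2"
    using True c X by (intro divide_left_mono power_mono mult_pos_pos) (auto simp: clip01_def)
  then show ?thesis
    using True q by (intro mult_right_mono) (auto simp: clip01_def)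
next
  case False
  show ?thesis
  proof (cases "1 \<le> u")
    case True
    then have "c1 + c2 * clip01 u \<le> c1 + c2 * u"
      using c by (simp add: clip01_def)
    then have "c1 / (c1 + c2 * u)\<^sup>2 \<le> c1 / (c1 + c2 * clip01 u)\<^sup>2"
      using True c X by (intro divide_left_mono power_mono mult_pos_pos) (auto simp: clip01_def)
    then show ?thesis
      using True q by (intro mult_right_mono_neg) (auto simp: clip01_def)
  next
    case False
    with \<open>\<not> u \<le> 0\<close> show ?thesis
      by (simp add: clip01_def)
  qed
qed

lemma water_filling_term_le:
  fixes c1 c2 \<nu> p q :: real
  assumes c: "0 < c1" "0 < c2" and \<nu>: "0 < \<nu>" and p: "0 < p" and q: "0 \<le> q" "q \<le> 1"
  defines "u \<equiv> sqrt c1 / (sqrt \<nu> * c2) * sqrt p - c1 / c2"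
  shows "p * q / (c1 + c2 * q) - p * clip01 u / (c1 + c2 * clip01 u) \<le> \<nu> * (q - clip01 u)"
proof -
  have u: "c1 + c2 * u = sqrt c1 * sqrt p / sqrt \<nu>"
    using c by (simp add: u_def field_simps)
  then have "0 < c1 + c2 * u"
    using c p \<nu> by simp
  have "\<nu> = p * (c1 / (c1 + c2 * u)\<^sup>2)"
    unfolding u using c p \<nu> by (simp add: power_divide power_mult_distrib)
  moreover have "0 \<le> clip01 u"
    by (simp add: clip01_def)
  ultimately show ?thesis
    using ratio_le_tangent[OF c _ q(1), of p "clip01 u"] p
      mult_left_mono[OF clip01_tangent_slope_le[OF c \<open>0 < c1 + c2 * u\<close> q], of p]
    by (simp add: mult.assoc)
qed

lemma water_filling_optimal:
  fixes c1 c2 \<nu> :: real and p q :: "'a \<Rightarrow> real"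
  assumes c: "0 < c1" "0 < c2" and \<nu>: "0 < \<nu>" and p: "\<forall>f\<in>A. 0 < p f"
    and level: "(\<Sum>f\<in>A. clip01 (sqrt c1 / (sqrt \<nu> * c2) * sqrt (p f) - c1 / c2)) = N"
    and q: "\<forall>f\<in>A. 0 \<le> q f \<and> q f \<le> 1" and budget: "(\<Sum>f\<in>A. q f) \<le> N"
  shows "(\<Sum>f\<in>A. p f * q f / (c1 + c2 * q f)) \<le>
      (\<Sum>f\<in>A. p f * clip01 (sqrt c1 / (sqrt \<nu> * c2) * sqrt (p f) - c1 / c2) /
        (c1 + c2 * clip01 (sqrt c1 / (sqrt \<nu> * c2) * sqrt (p f) - c1 / c2)))"
proof -
  define q\<^sub>\<nu> where "q\<^sub>\<nu> f = clip01 (sqrt c1 / (sqrt \<nu> * c2) * sqrt (p f) - c1 / c2)" for f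
  have "(\<Sum>f\<in>A. p f * q f / (c1 + c2 * q f) - p f * q\<^sub>\<nu> f / (c1 + c2 * q\<^sub>\<nu> f)) \<le> (\<Sum>f\<in>A. \<nu> * (q f - q\<^sub>\<nu> f))"
    unfolding q\<^sub>\<nu>_def by (intro sum_mono) (use water_filling_term_le[OF c \<nu>] p q in auto)
  also have "\<dots> = \<nu> * ((\<Sum>f\<in>A. q f) - N)"
    using level by (simp add: q\<^sub>\<nu>_def sum_distrib_left[symmetric] sum_subtractf)
  also have "\<dots> \<le> 0"
    using \<nu> budget by (simp add: mult_nonneg_nonpos)
  finally show ?thesis
    by (simp add: q\<^sub>\<nu>_def sum_subtractf)
qed

lemma sum_clip01_eq_card:
  assumes "0 < s" and "\<forall>f\<in>A. (1 + b) * s \<le> r f"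
  shows "(\<Sum>f\<in>A. clip01 (r f / s - b)) = real (card A)"
proof -
  have "clip01 (r f / s - b) = 1" if "f \<in> A" for f
    using assms that by (simp add: clip01_def field_simps)
  then show ?thesis
    by simp
qed

lemma sum_clip01_eq_zero:
  assumes "0 < s" and "\<forall>f\<in>A. r f \<le> b * s"
  shows "(\<Sum>f\<in>A. clip01 (r f / s - b)) = 0"
proof -
  have "clip01 (r f / s - b) = 0" if "f \<in> A" for f
  proof -
    have "r f / s \<le> b"
      using assms that by (simp add: divide_le_eq mult.commute)
    then show ?thesis
      by (simp add: clip01_def)
  qed
  then show ?thesis
    by simp
qed

lemma water_filling_level_exists:
  fixes r :: "'a \<Rightarrow> real"
  assumes "finite A" "A \<noteq> {}" and r: "\<forall>f\<in>A. 0 < r f" and b: "0 < b"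
    and N: "0 \<le> N" "N \<le> real (card A)"
  shows "\<exists>\<nu>>0. (\<Sum>f\<in>A. clip01 (r f / sqrt \<nu> - b)) = N"
proof -
  define m where "m = Min (r ` A)"
  define M where "M = Max (r ` A)"
  have m: "0 < m" "\<forall>f\<in>A. m \<le> r f" and M: "\<forall>f\<in>A. r f \<le> M"
    using assms by (auto simp: m_def M_def)
  have "m \<le> M"
    using m M \<open>A \<noteq> {}\<close> by force
  define \<phi> where "\<phi> \<nu> = (\<Sum>f\<in>A. clip01 (r f / sqrt \<nu> - b))" for \<nu>
  define \<nu>\<^sub>0 where "\<nu>\<^sub>0 = (m / (1 + b))\<^sup>2"
  define \<nu>\<^sub>1 where "\<nu>\<^sub>1 = (M / b)\<^sup>2"
  have "0 < \<nu>\<^sub>0"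
    using m b by (simp add: \<nu>\<^sub>0_def)
  have "\<phi> \<nu>\<^sub>0 = real (card A)"
    unfolding \<phi>_def using m b by (intro sum_clip01_eq_card) (simp_all add: \<nu>\<^sub>0_def)
  moreover have "\<phi> \<nu>\<^sub>1 = 0"
    unfolding \<phi>_def using m M \<open>m \<le> M\<close> b by (intro sum_clip01_eq_zero) (simp_all add: \<nu>\<^sub>1_def)
  moreover have "\<nu>\<^sub>0 \<le> \<nu>\<^sub>1"
  proof -
    have "m / (1 + b) \<le> m / b"
      using m b by (intro divide_left_mono) auto
    also have "\<dots> \<le> M / b"
      using \<open>m \<le> M\<close> b by (intro divide_right_mono) auto
    finally show ?thesis
      using m b by (simp add: \<nu>\<^sub>0_def \<nu>\<^sub>1_def power_mono)
  qed
  moreover have "isCont \<phi> \<nu>" if "\<nu>\<^sub>0 \<le> \<nu>" for \<nu>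
    using that \<open>0 < \<nu>\<^sub>0\<close> unfolding \<phi>_def[abs_def] clip01_def by (intro continuous_intros) auto
  ultimately obtain \<nu> where "\<nu>\<^sub>0 \<le> \<nu>" "\<phi> \<nu> = N"
    using IVT2[of \<phi> \<nu>\<^sub>1 N \<nu>\<^sub>0] N by auto
  with \<open>0 < \<nu>\<^sub>0\<close> show ?thesis
    unfolding \<phi>_def by (intro exI[of _ \<nu>]) auto
qed

lemma water_filling_solution:
  fixes c1 c2 :: real and p :: "nat \<Rightarrow> real"
  assumes "1 \<le> Nf" "Nc \<le> Nf" and p: "\<forall>f\<in>{1..Nf}. 0 < p f" and c: "0 < c1" "0 < c2"
  shows "(\<exists>\<nu>>0. (\<Sum>f=1..Nf. clip01 (sqrt c1 / (sqrt \<nu> * c2) * sqrt (p f) - c1 / c2)) = real Nc) \<and>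
     (\<forall>\<nu>>0. (\<Sum>f=1..Nf. clip01 (sqrt c1 / (sqrt \<nu> * c2) * sqrt (p f) - c1 / c2)) = real Nc \<longrightarrow>
        (\<lambda>f. clip01 (sqrt c1 / (sqrt \<nu> * c2) * sqrt (p f) - c1 / c2)) \<in> feasible_set Nf Nc \<and>
        (\<forall>q\<in>feasible_set Nf Nc. (\<Sum>f=1..Nf. p f * q f / (c1 + c2 * q f)) \<le>
           (\<Sum>f=1..Nf. p f * clip01 (sqrt c1 / (sqrt \<nu> * c2) * sqrt (p f) - c1 / c2) /
              (c1 + c2 * clip01 (sqrt c1 / (sqrt \<nu> * c2) * sqrt (p f) - c1 / c2)))))"
proof (intro conjI allI impI ballI)
  have "\<exists>\<nu>>0. (\<Sum>f=1..Nf. clip01 (sqrt c1 * sqrt (p f) / c2 / sqrt \<nu> - c1 / c2)) = real Nc"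
    by (rule water_filling_level_exists) (use assms in auto)
  then show "\<exists>\<nu>>0. (\<Sum>f=1..Nf. clip01 (sqrt c1 / (sqrt \<nu> * c2) * sqrt (p f) - c1 / c2)) = real Nc"
    by (simp add: mult.commute)
next
  fix \<nu> :: real
  assume "(\<Sum>f=1..Nf. clip01 (sqrt c1 / (sqrt \<nu> * c2) * sqrt (p f) - c1 / c2)) = real Nc"
  then show "(\<lambda>f. clip01 (sqrt c1 / (sqrt \<nu> * c2) * sqrt (p f) - c1 / c2)) \<in> feasible_set Nf Nc"
    by (auto simp: feasible_set_def clip01_def)
next
  fix \<nu> :: real and q
  assume "0 < \<nu>" "(\<Sum>f=1..Nf. clip01 (sqrt c1 / (sqrt \<nu> * c2) * sqrt (p f) - c1 / c2)) = real Nc"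
    and "q \<in> feasible_set Nf Nc"
  then show "(\<Sum>f=1..Nf. p f * q f / (c1 + c2 * q f)) \<le>
      (\<Sum>f=1..Nf. p f * clip01 (sqrt c1 / (sqrt \<nu> * c2) * sqrt (p f) - c1 / c2) /
        (c1 + c2 * clip01 (sqrt c1 / (sqrt \<nu> * c2) * sqrt (p f) - c1 / c2)))"
    by (intro water_filling_optimal[OF c _ p]) (auto simp: feasible_set_def)
qed

lemma one_minus_powr_neg_bounds:
  fixes a s :: real
  assumes "0 \<le> a" "0 < s"
  shows "0 \<le> 1 - (1 + a) powr (-s)" "1 - (1 + a) powr (-s) < 1"
proof -
  have "(1 + a) powr (-s) \<le> 1 powr (-s)"
    using assms by (intro powr_mono2') auto
  moreover have "0 < (1 + a) powr (-s)"
    using assms by simp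
  ultimately show "0 \<le> 1 - (1 + a) powr (-s)" "1 - (1 + a) powr (-s) < 1"
    by simp_all
qed

lemma SUP_feasible_nonneg:
  fixes k :: real and p :: "nat \<Rightarrow> real"
  assumes "0 < k" and p: "\<forall>f\<in>{1..Nf}. 0 \<le> p f"
  shows "0 \<le> (SUP q\<in>feasible_set Nf Nc. \<Sum>f=1..Nf. p f * q f / (k + q f))"
proof -
  have zero: "(\<lambda>_. 0) \<in> feasible_set Nf Nc"
    by (simp add: feasible_set_def)
  have bdd: "bdd_above ((\<lambda>q. \<Sum>f=1..Nf. p f * q f / (k + q f)) ` feasible_set Nf Nc)"
  proof (rule bdd_aboveI)
    fix y
    assume "y \<in> (\<lambda>q. \<Sum>f=1..Nf. p f * q f / (k + q f)) ` feasible_set Nf Nc"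
    then obtain q where q: "\<forall>f\<in>{1..Nf}. 0 \<le> q f" and y: "y = (\<Sum>f=1..Nf. p f * q f / (k + q f))"
      by (auto simp: feasible_set_def)
    have "p f * q f / (k + q f) \<le> p f" if "f \<in> {1..Nf}" for f
    proof -
      have "0 \<le> q f"
        using q that by auto
      then have "q f / (k + q f) \<le> 1"
        using \<open>0 < k\<close> by simp
      then show ?thesis
        using mult_left_mono[of "q f / (k + q f)" 1 "p f"] p that by simp
    qed
    then show "y \<le> (\<Sum>f=1..Nf. p f)"
      unfolding y by (rule sum_mono)
  qed
  from cSUP_upper[OF zero bdd] show ?thesis
    by simp
qed

lemma helper_tier_coefficients_pos:
  assumes \<delta>: "0 < \<delta>" "\<delta> < 1" and "0 < k" and pb: "0 \<le> pb" "pb < 1" and "0 < \<gamma>"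
    and "1 \<le> M" and "0 < B"
  defines "G \<equiv> Gamma (1 - \<delta>) * Gamma (1 + \<delta>) * \<gamma> powr \<delta>"
  shows "0 < k * hyp2F1 (-\<delta>) M (1 - \<delta>) (- \<gamma> / (M * B)) + pb * G"
    and "0 < pb * (hyp2F1 (-\<delta>) 1 (1 - \<delta>) (- \<gamma>) - G - 1) + 1"
proof -
  have "0 < G"
    unfolding G_def using \<delta> \<open>0 < \<gamma>\<close> by (intro mult_pos_pos Gamma_real_pos) auto
  have "1 \<le> hyp2F1 (-\<delta>) M (1 - \<delta>) (- (\<gamma> / (M * B)))"
    using hyp2F1_neg_ge_one[OF \<delta> \<open>1 \<le> M\<close>] \<open>0 < \<gamma>\<close> \<open>1 \<le> M\<close> \<open>0 < B\<close> by simp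
  then show "0 < k * hyp2F1 (-\<delta>) M (1 - \<delta>) (- \<gamma> / (M * B)) + pb * G"
    using \<open>0 < k\<close> \<open>0 < G\<close> pb mult_le_cancel_left1[of k] by (simp add: add_pos_nonneg)
  have "G \<le> hyp2F1 (-\<delta>) 1 (1 - \<delta>) (- \<gamma>)"
    unfolding G_def by (rule hyp2F1_one_ge_Gamma[OF \<delta> \<open>0 < \<gamma>\<close>])
  then have "pb * (-1) \<le> pb * (hyp2F1 (-\<delta>) 1 (1 - \<delta>) (- \<gamma>) - G - 1)"
    using pb by (intro mult_left_mono) auto
  then show "0 < pb * (hyp2F1 (-\<delta>) 1 (1 - \<delta>) (- \<gamma>) - G - 1) + 1"
    using pb by linarith
qed

theorem proposition2:
  fixes Nf Nc M1 :: nat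
    and p :: "nat \<Rightarrow> real"
    and \<alpha> lam1 lam2 lamu P1 P2 B1 B2 W R0 :: real
  assumes "1 \<le> Nf" and "1 \<le> Nc" and "Nc \<le> Nf"
    and "\<forall>f\<in>{1..Nf}. p f > 0" and "(\<Sum>f=1..Nf. p f) = 1"
    and "\<alpha> > 2" and "1 \<le> M1"
    and "lam1 > 0" "lam2 > 0" "lamu > 0" "P1 > 0" "P2 > 0" "B1 > 0" "B2 > 0" "W > 0" "R0 > 0"
  shows
   "let M12 = real M1; lam12 = lam1 / lam2; P12 = P1 / P2; B12 = B1 / B2;
        F = feasible_set Nf Nc;
        Po = (SUP q\<in>F. \<Sum>f=1..Nf. p f * q f / (lam12 * (P12 * B12) powr (2 / \<alpha>) + q f));
        \<gamma> = 2 powr ((R0 / W) * (1 + 1.28 * lamu * Po / lam2)) - 1;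
        pb = 1 - (1 + Po * lamu / (3.5 * lam2)) powr (-3.5);
        C1 = (\<lambda>x. lam12 * (P12 * B12) powr (2 / \<alpha>) *
                 hyp2F1 (-(2 / \<alpha>)) (real M1) (1 - 2 / \<alpha>) (- x / (M12 * B12)));
        C2 = (\<lambda>x. Gamma (1 - 2 / \<alpha>) * Gamma (1 + 2 / \<alpha>) * x powr (2 / \<alpha>));
        C3 = (\<lambda>x. hyp2F1 (-(2 / \<alpha>)) 1 (1 - 2 / \<alpha>) (- x) - C2 x - 1);
        c1 = C1 \<gamma> + pb * C2 \<gamma>;
        c2 = pb * C3 \<gamma> + 1;
        ps2 = (\<lambda>q. \<Sum>f=1..Nf. p f * q f / (c1 + c2 * q f));
        qn = (\<lambda>\<nu> f. clip01 (sqrt c1 / (sqrt \<nu> * c2) * sqrt (p f) - c1 / c2))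
    in (\<exists>\<nu>>0. (\<Sum>f=1..Nf. qn \<nu> f) = real Nc) \<and>
       (\<forall>\<nu>>0. (\<Sum>f=1..Nf. qn \<nu> f) = real Nc \<longrightarrow>
          qn \<nu> \<in> F \<and> (\<forall>q\<in>F. ps2 q \<le> ps2 (qn \<nu>)))"
proof -
  have \<delta>: "0 < 2 / \<alpha>" "2 / \<alpha> < 1"
    using \<open>\<alpha> > 2\<close> by auto
  define k where "k = lam1 / lam2 * (P1 / P2 * (B1 / B2)) powr (2 / \<alpha>)"
  have "0 < k"
    using \<open>lam1 > 0\<close> \<open>lam2 > 0\<close> \<open>P1 > 0\<close> \<open>P2 > 0\<close> \<open>B1 > 0\<close> \<open>B2 > 0\<close> by (simp add: k_def)
  define Po where "Po = (SUP q\<in>feasible_set Nf Nc. \<Sum>f=1..Nf. p f * q f / (k + q f))"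
  have "0 \<le> Po"
    unfolding Po_def using \<open>0 < k\<close> assms(4) by (intro SUP_feasible_nonneg) auto
  define \<gamma> where "\<gamma> = 2 powr ((R0 / W) * (1 + 1.28 * lamu * Po / lam2)) - 1"
  have "0 < (R0 / W) * (1 + 1.28 * lamu * Po / lam2)"
    using \<open>0 \<le> Po\<close> assms by (intro mult_pos_pos add_pos_nonneg) auto
  then have "0 < \<gamma>"
    by (simp add: \<gamma>_def gr_one_powr)
  define pb where "pb = 1 - (1 + Po * lamu / (3.5 * lam2)) powr (-3.5)"
  have pb: "0 \<le> pb" "pb < 1"
    unfolding pb_def using one_minus_powr_neg_bounds[of "Po * lamu / (3.5 * lam2)" "3.5"] \<open>0 \<le> Po\<close> assms
    by simp_all
  have "1 \<le> real M1" "0 < B1 / B2"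
    using assms by auto
  from helper_tier_coefficients_pos[OF \<delta> \<open>0 < k\<close> pb \<open>0 < \<gamma>\<close> this]
  show ?thesis
    using water_filling_solution[OF assms(1,3,4)]
    unfolding Let_def k_def pb_def \<gamma>_def Po_def by blast
qed

end
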